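(* If the toric algebra $A_{\mathscr{E}}$ is consistent, then $\ker(\pi)$ equals the subgroup $L\subseteq\mathbb{Z}^{Q_1}$ generated by the vectors $v(p^+)-v(p^-)$ for which there is $q\in\mathscr{P}$ with $\partial_qW=p^++p^-$; that is, the quotient map $\operatorname{wt}:\mathbb{Z}^{Q_1}\to\Lambda=\mathbb{Z}^{Q_1}/L$ coincides with $\pi:\mathbb{Z}^{Q_1}\to\mathbb{Z}(Q)$. In particular, $A_{\mathscr{E}}$ is graded by the semigroup $\Lambda_+=\operatorname{wt}(\mathbb{N}^{Q_1})=\mathbb{N}(Q)$, a path $p$ having degree $\pi(v(p))$.
   Context: Let $\mathbb{k}$ be an algebraically closed field and $X=\operatorname{Spec}R$ a normal affine toric variety of dimension $n$ with a torus-fixed point, $R=\mathbb{k}[\sigma^\vee\cap M]$, $\sigma\subset N\otimes\mathbb{R}$ strongly convex rational polyhedral. Let $\sigma(1)$ be the rays, $d=|\sigma(1)|$, $v_\rho$ primitive generators, $D_\rho$ toric prime divisors, torus-invariant divisors identified with $\mathbb{Z}^d$, $\deg:\mathbb{Z}^d\to\operatorname{Cl}(X)$ the class map. Cox ring $\mathbb{k}[x_\rho]$, $x^D=\prod x_\rho^{D_\rho}$. Assume $X$ is Gorenstein: $(1,\dots,1)\in\mathbb{Z}^d$ lies in the image of $M$ under $u\mapsto\sum\langle u,v_\rho\rangle D_\rho$. Let $\mathscr{E}=(E_0=\mathcal{O}_X,E_1,\dots,E_r)$ be pairwise distinct rank one reflexive sheaves, $E_i=\mathcal{O}_X(D_i')$,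 and $Q$ its quiver of sections: vertices $0,\dots,r$; an arrow $a:i\to j$ with label $\operatorname{div}(a)\in\mathbb{N}^d$ for each irreducible $T_M$-invariant section $x^{\operatorname{div}(a)}$ of $\operatorname{Hom}(E_i,E_j)\cong H^0(\mathcal{O}_X(D_j'-D_i'))$ (irreducible: not in the image of multiplication through any $E_k$, $k\neq i,j$). Paths compose right to left; $\operatorname{div}(p)$ is the sum of labels of arrows of $p$; $v(p)=\sum_a(\text{number of times }a\text{ occurs in }p)\chi_a\in\mathbb{Z}^{Q_1}$. $J_{\mathscr{E}}$ is generated by $p^+-p^-$ over pairs of paths with equal head, tail and label; $A_{\mathscr{E}}=\mathbb{k}Q/J_{\mathscr{E}}$. A cycle $p$ is anticanonical if $x^{\operatorname{div}(p)}=\prod_\rho x_\rho$. For a path $q$, $\partial_qW$ is the sum of all paths $p$ such that $pq$ is an anticanonical cycle. $\mathscr{P}$ is the set of paths $q$ with $\partial_qW$ a sum of precisely two paths sharing neither initial nor final arrow; $J_W$ is generated by $p^+-p^-$ whenever $\partial_qW=p^++p^-$, $q\in\mathscr{P}$. $A_{\mathscr{E}}$ is consistent if $J_W=J_{\mathscr{E}}$. $\operatorname{Wt}(Q)=\{\theta\in\mathbb{Z}^{Q_0}:\sum\theta_i=0\}$; $\pi:\mathbb{Z}^{Q_1}\to\operatorname{Wt}(Q)\oplus\mathbb{Z}^d$, $\chi_a\mapsto(\chi_{\mathsf{h}(a)}-\chi_{\mathsf{t}(a)},\operatorname{div}(a))$; $\mathbb{Z}(Q)=\pi(\mathbb{Z}^{Q_1})$,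 $\mathbb{N}(Q)=\pi(\mathbb{N}^{Q_1})$. *)

theory Defs
  imports "HOL-Library.Poly_Mapping" "HOL-Computational_Algebra.Polynomial"
begin

text \<open>M = Z^n is modelled by functions nat => int (only components k < n matter);
  the primitive ray generators are v rho (rho < d), each a function nat => int.
  Torus-invariant divisors are functions nat => int (components rho < d).\<close>

definition pairing :: "nat \<Rightarrow> (nat \<Rightarrow> int) \<Rightarrow> (nat \<Rightarrow> int) \<Rightarrow> int" where
  "pairing n u w = (\<Sum>k<n. u k * w k)"

text \<open>Linear equivalence of torus-invariant divisors: D - D' = div(chi^u) for some u in M.\<close>
definition lin_equiv :: "nat \<Rightarrow> nat \<Rightarrow> (nat \<Rightarrow> nat \<Rightarrow> int) \<Rightarrow> (nat \<Rightarrow> int) \<Rightarrow> (nat \<Rightarrow> int) \<Rightarrow> bool" where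
  "lin_equiv n d v D D' \<longleftrightarrow> (\<exists>u. \<forall>\<rho><d. D \<rho> - D' \<rho> = pairing n u (v \<rho>))"

text \<open>x^E (E effective, E in N^d) is a T_M-invariant section of O_X(D) iff E ~ D.\<close>
definition is_section :: "nat \<Rightarrow> nat \<Rightarrow> (nat \<Rightarrow> nat \<Rightarrow> int) \<Rightarrow> (nat \<Rightarrow> int) \<Rightarrow> (nat \<Rightarrow> nat) \<Rightarrow> bool" where
  "is_section n d v D E \<longleftrightarrow> (\<forall>\<rho>\<ge>d. E \<rho> = 0) \<and> lin_equiv n d v (\<lambda>\<rho>. int (E \<rho>)) D"

text \<open>Irreducible T_M-invariant section x^E of Hom(E_i,E_j) = H^0(O_X(D_j - D_i)):
  not the identity, and not a product through E_k for any k different from i, j.\<close>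
definition irreducible_section ::
  "nat \<Rightarrow> nat \<Rightarrow> (nat \<Rightarrow> nat \<Rightarrow> int) \<Rightarrow> nat \<Rightarrow> (nat \<Rightarrow> nat \<Rightarrow> int) \<Rightarrow> nat \<Rightarrow> nat \<Rightarrow> (nat \<Rightarrow> nat) \<Rightarrow> bool" where
  "irreducible_section n d v r D i j E \<longleftrightarrow>
     is_section n d v (\<lambda>\<rho>. D j \<rho> - D i \<rho>) E \<and> E \<noteq> (\<lambda>_. 0) \<and>
     \<not> (\<exists>k\<le>r. k \<noteq> i \<and> k \<noteq> j \<and> (\<exists>E1 E2.
          is_section n d v (\<lambda>\<rho>. D k \<rho> - D i \<rho>) E1 \<and>
          is_section n d v (\<lambda>\<rho>. D j \<rho> - D k \<rho>) E2 \<and>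
          E = (\<lambda>\<rho>. E1 \<rho> + E2 \<rho>)))"

type_synonym arrow = "nat \<times> nat \<times> (nat \<Rightarrow> nat)"

definition atail :: "arrow \<Rightarrow> nat" where "atail a = fst a"
definition ahead :: "arrow \<Rightarrow> nat" where "ahead a = fst (snd a)"
definition alabel :: "arrow \<Rightarrow> nat \<Rightarrow> nat" where "alabel a = snd (snd a)"

definition quiver_arrows :: "nat \<Rightarrow> nat \<Rightarrow> (nat \<Rightarrow> nat \<Rightarrow> int) \<Rightarrow> nat \<Rightarrow> (nat \<Rightarrow> nat \<Rightarrow> int) \<Rightarrow> arrow set" where
  "quiver_arrows n d v r D = {(i, j, E). i \<le> r \<and> j \<le> r \<and> irreducible_section n d v r D i j E}"

text \<open>A path is (tail vertex, list of arrows in order of traversal). The path written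
  a_k ... a_1 (right to left) is (tail a_1, [a_1, ..., a_k]); (i, []) is the trivial path e_i.\<close>
type_synonym path = "nat \<times> arrow list"

definition ptail :: "path \<Rightarrow> nat" where "ptail p = fst p"
definition phead :: "path \<Rightarrow> nat" where
  "phead p = (if snd p = [] then fst p else ahead (last (snd p)))"

definition valid_path :: "nat \<Rightarrow> arrow set \<Rightarrow> path \<Rightarrow> bool" where
  "valid_path r Q1 p \<longleftrightarrow> fst p \<le> r \<and> set (snd p) \<subseteq> Q1 \<and>
     (snd p \<noteq> [] \<longrightarrow> atail (hd (snd p)) = fst p) \<and>
     successively (\<lambda>a b. ahead a = atail b) (snd p)"

text \<open>pcomp p q is the path pq (first q, then p).\<close>
definition pcomp :: "path \<Rightarrow> path \<Rightarrow> path" where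
  "pcomp p q = (fst q, snd q @ snd p)"

definition pdiv :: "path \<Rightarrow> nat \<Rightarrow> nat" where
  "pdiv p = (\<lambda>\<rho>. sum_list (map (\<lambda>a. alabel a \<rho>) (snd p)))"

definition anticanonical :: "nat \<Rightarrow> nat \<Rightarrow> arrow set \<Rightarrow> path \<Rightarrow> bool" where
  "anticanonical d r Q1 c \<longleftrightarrow> valid_path r Q1 c \<and> snd c \<noteq> [] \<and> phead c = ptail c \<and>
     (\<forall>\<rho><d. pdiv c \<rho> = 1)"

text \<open>The set of paths p occurring in partial_q W (each with coefficient one).\<close>
definition derivW :: "nat \<Rightarrow> nat \<Rightarrow> arrow set \<Rightarrow> path \<Rightarrow> path set" where
  "derivW d r Q1 q = {p. valid_path r Q1 p \<and> ptail p = phead q \<and> anticanonical d r Q1 (pcomp p q)}"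

definition share_initial :: "path \<Rightarrow> path \<Rightarrow> bool" where
  "share_initial p p' \<longleftrightarrow> snd p \<noteq> [] \<and> snd p' \<noteq> [] \<and> hd (snd p) = hd (snd p')"

definition share_final :: "path \<Rightarrow> path \<Rightarrow> bool" where
  "share_final p p' \<longleftrightarrow> snd p \<noteq> [] \<and> snd p' \<noteq> [] \<and> last (snd p) = last (snd p')"

definition Pset :: "nat \<Rightarrow> nat \<Rightarrow> arrow set \<Rightarrow> path set" where
  "Pset d r Q1 = {q. valid_path r Q1 q \<and> (\<exists>pp pm. derivW d r Q1 q = {pp, pm} \<and> pp \<noteq> pm \<and>
      \<not> share_initial pp pm \<and> \<not> share_final pp pm)}"

definition pa_path :: "path \<Rightarrow> (path \<Rightarrow>\<^sub>0 'k::field)" where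
  "pa_path p = Poly_Mapping.single p 1"

definition pa_mult :: "nat \<Rightarrow> arrow set \<Rightarrow> (path \<Rightarrow>\<^sub>0 'k::field) \<Rightarrow> (path \<Rightarrow>\<^sub>0 'k) \<Rightarrow> (path \<Rightarrow>\<^sub>0 'k)" where
  "pa_mult r Q1 x y = (\<Sum>p\<in>Poly_Mapping.keys x. \<Sum>q\<in>Poly_Mapping.keys y.
      if valid_path r Q1 p \<and> valid_path r Q1 q \<and> ptail p = phead q
      then Poly_Mapping.single (pcomp p q) (Poly_Mapping.lookup x p * Poly_Mapping.lookup y q) else 0)"

inductive_set ideal_gen :: "nat \<Rightarrow> arrow set \<Rightarrow> (path \<Rightarrow>\<^sub>0 'k::field) set \<Rightarrow> (path \<Rightarrow>\<^sub>0 'k) set"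
  for r Q1 S where
  zero: "0 \<in> ideal_gen r Q1 S"
| gen: "s \<in> S \<Longrightarrow> s \<in> ideal_gen r Q1 S"
| add: "x \<in> ideal_gen r Q1 S \<Longrightarrow> y \<in> ideal_gen r Q1 S \<Longrightarrow> x + y \<in> ideal_gen r Q1 S"
| lmult: "x \<in> ideal_gen r Q1 S \<Longrightarrow> pa_mult r Q1 u x \<in> ideal_gen r Q1 S"
| rmult: "x \<in> ideal_gen r Q1 S \<Longrightarrow> pa_mult r Q1 x u \<in> ideal_gen r Q1 S"

definition J_E :: "nat \<Rightarrow> arrow set \<Rightarrow> (path \<Rightarrow>\<^sub>0 'k::field) set" where
  "J_E r Q1 = ideal_gen r Q1 {pa_path p - pa_path p' | p p'.
      valid_path r Q1 p \<and> valid_path r Q1 p' \<and> ptail p = ptail p' \<and> phead p = phead p' \<and> pdiv p = pdiv p'}"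

definition J_W :: "nat \<Rightarrow> nat \<Rightarrow> arrow set \<Rightarrow> (path \<Rightarrow>\<^sub>0 'k::field) set" where
  "J_W d r Q1 = ideal_gen r Q1 {pa_path p - pa_path p' | p p' q.
      q \<in> Pset d r Q1 \<and> derivW d r Q1 q = {p, p'}}"

definition vvec :: "path \<Rightarrow> (arrow \<Rightarrow>\<^sub>0 int)" where
  "vvec p = sum_list (map (\<lambda>a. Poly_Mapping.single a 1) (snd p))"

text \<open>pi : Z^{Q_1} -> Wt(Q) (+) Z^d, with Wt(Q) inside functions on vertices.\<close>
definition pi_map :: "(arrow \<Rightarrow>\<^sub>0 int) \<Rightarrow> (nat \<Rightarrow> int) \<times> (nat \<Rightarrow> int)" where
  "pi_map w = ((\<lambda>i. \<Sum>a\<in>Poly_Mapping.keys w. Poly_Mapping.lookup w a * (of_bool (ahead a = i) - of_bool (atail a = i))),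
               (\<lambda>\<rho>. \<Sum>a\<in>Poly_Mapping.keys w. Poly_Mapping.lookup w a * int (alabel a \<rho>)))"

definition ker_pi :: "arrow set \<Rightarrow> (arrow \<Rightarrow>\<^sub>0 int) set" where
  "ker_pi Q1 = {w. Poly_Mapping.keys w \<subseteq> Q1 \<and> pi_map w = ((\<lambda>_. 0), (\<lambda>_. 0))}"

inductive_set zspan :: "('a \<Rightarrow>\<^sub>0 int) set \<Rightarrow> ('a \<Rightarrow>\<^sub>0 int) set" for S where
  zero: "0 \<in> zspan S"
| gen: "s \<in> S \<Longrightarrow> s \<in> zspan S"
| add: "x \<in> zspan S \<Longrightarrow> y \<in> zspan S \<Longrightarrow> x + y \<in> zspan S"
| neg: "x \<in> zspan S \<Longrightarrow> - x \<in> zspan S"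

definition L_lattice :: "nat \<Rightarrow> nat \<Rightarrow> arrow set \<Rightarrow> (arrow \<Rightarrow>\<^sub>0 int) set" where
  "L_lattice d r Q1 = zspan {vvec p - vvec p' | p p' q. q \<in> Pset d r Q1 \<and> derivW d r Q1 q = {p, p'}}"

definition homog_comp :: "(nat \<Rightarrow> int) \<times> (nat \<Rightarrow> int) \<Rightarrow> (path \<Rightarrow>\<^sub>0 'k::field) \<Rightarrow> (path \<Rightarrow>\<^sub>0 'k)" where
  "homog_comp \<gamma> x = Abs_poly_mapping (\<lambda>p. if pi_map (vvec p) = \<gamma> then Poly_Mapping.lookup x p else 0)"

end

theory Submission
  imports Defs "HOL-Library.Product_Plus" "HOL-Library.Function_Algebras"
begin

text \<open>The inclusion \<open>L \<subseteq> ker \<pi>\<close> holds because the two terms of \<open>\<partial>\<^sub>qW\<close> are parallel paths with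
  the same label. Conversely, since \<open>X\<close> is Gorenstein every divisor has sections, so the quiver
  of sections is strongly connected and every \<open>w \<in> ker \<pi>\<close> is \<open>v(P) - v(N)\<close> for closed walks
  \<open>P, N\<close> at vertex \<open>0\<close>; \<open>\<pi>(w) = 0\<close> forces \<open>div P = div N\<close>, so \<open>P - N \<in> J\<^sub>E = J\<^sub>W\<close>.
  Every element of \<open>J\<^sub>W\<close> has zero coefficient sum on each class of parallel paths with
  \<open>v\<close>-vectors congruent modulo \<open>L\<close>: the generators do, and multiplication by a path maps
  classes to classes. Hence \<open>N\<close> lies in the class of \<open>P\<close>, i.e. \<open>w \<in> L\<close>. Homogeneity of \<open>J\<^sub>E\<close>
  holds because its generators are differences of paths of equal degree \<open>\<pi>(v(p))\<close> and
  the degree is additive under composition.\<close>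

lemma ptail_pcomp [simp]: "ptail (pcomp p q) = ptail q"
  by (simp add: ptail_def pcomp_def)

lemma phead_pcomp: "ptail p = phead q \<Longrightarrow> phead (pcomp p q) = phead p"
  by (cases p; cases q) (auto simp: phead_def ptail_def pcomp_def)

lemma valid_path_pcomp:
  assumes "valid_path r Q1 p" "valid_path r Q1 q" "ptail p = phead q"
  shows "valid_path r Q1 (pcomp p q)"
  using assms by (cases p; cases q)
    (auto simp: valid_path_def pcomp_def ptail_def phead_def successively_append_iff hd_append
          split: if_splits)

lemma vvec_pcomp: "vvec (pcomp p q) = vvec q + vvec p"
  by (simp add: vvec_def pcomp_def)

lemma pdiv_pcomp: "pdiv (pcomp p q) \<rho> = pdiv q \<rho> + pdiv p \<rho>"
  by (simp add: pdiv_def pcomp_def)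

lemma vvec_eq_sum_list: "vvec p = sum_list (map frag_of (snd p))"
  by (simp add: vvec_def)

lemma keys_vvec: "Poly_Mapping.keys (vvec p) \<subseteq> set (snd p)"
proof -
  have "Poly_Mapping.keys (sum_list (map frag_of xs)) \<subseteq> set xs" for xs :: "arrow list"
    by (induction xs) (use keys_add in fastforce)+
  then show ?thesis by (simp add: vvec_eq_sum_list)
qed

lemma valid_path_trivial: "i \<le> r \<Longrightarrow> valid_path r Q1 (i, [])"
  by (simp add: valid_path_def)

lemma valid_path_arrow:
  "a \<in> Q1 \<Longrightarrow> atail a \<le> r \<Longrightarrow> valid_path r Q1 (atail a, [a])"
  by (simp add: valid_path_def)

lemma phead_valid_path_le:
  assumes "valid_path r Q1 p" "\<forall>a\<in>Q1. ahead a \<le> r"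
  shows "phead p \<le> r"
  using assms by (cases "snd p = []") (auto simp: phead_def valid_path_def dest!: last_in_set)

lemma pi_map_eq_sum:
  assumes "finite A" "Poly_Mapping.keys w \<subseteq> A"
  shows "pi_map w =
    ((\<lambda>i. \<Sum>a\<in>A. Poly_Mapping.lookup w a * (of_bool (ahead a = i) - of_bool (atail a = i))),
     (\<lambda>\<rho>. \<Sum>a\<in>A. Poly_Mapping.lookup w a * int (alabel a \<rho>)))"
  unfolding pi_map_def using assms
  by (auto intro!: sum.mono_neutral_left simp: in_keys_iff fun_eq_iff)

lemma pi_map_add: "pi_map (x + y) = pi_map x + pi_map y"
proof -
  let ?A = "Poly_Mapping.keys x \<union> Poly_Mapping.keys y"
  have "finite ?A" "Poly_Mapping.keys (x + y) \<subseteq> ?A" "Poly_Mapping.keys x \<subseteq> ?A"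
    "Poly_Mapping.keys y \<subseteq> ?A"
    using keys_add[of x y] by auto
  then show ?thesis
    by (simp add: pi_map_eq_sum[of ?A] lookup_add sum.distrib distrib_right fun_eq_iff)
qed

lemma pi_map_uminus: "pi_map (- x) = - pi_map x"
  by (simp add: pi_map_def sum_negf fun_eq_iff)

lemma pi_map_diff: "pi_map (x - y) = pi_map x - pi_map y"
  by (simp only: diff_conv_add_uminus pi_map_add pi_map_uminus)

lemma pi_map_zero [simp]: "pi_map 0 = 0"
  by (simp add: pi_map_def zero_prod_def zero_fun_def)

lemma pi_map_frag_of:
  "pi_map (frag_of a) = ((\<lambda>i. of_bool (ahead a = i) - of_bool (atail a = i)), (\<lambda>\<rho>. int (alabel a \<rho>)))"
  by (simp add: pi_map_def)

lemma pi_map_arrow_list: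
  assumes "successively (\<lambda>a b. ahead a = atail b) xs" "xs \<noteq> []"
  shows "pi_map (sum_list (map frag_of xs)) =
    ((\<lambda>i. of_bool (ahead (last xs) = i) - of_bool (atail (hd xs) = i)),
     (\<lambda>\<rho>. int (sum_list (map (\<lambda>a. alabel a \<rho>) xs))))"
  using assms
proof (induction xs rule: induct_list012)
  case (3 a b xs)
  then have "ahead a = atail b" by simp
  with 3 show ?case by (simp add: pi_map_add pi_map_frag_of fun_eq_iff)
qed (simp_all add: pi_map_frag_of)

lemma pi_map_vvec:
  assumes "valid_path r Q1 p"
  shows "pi_map (vvec p) =
    ((\<lambda>i. of_bool (phead p = i) - of_bool (ptail p = i)), (\<lambda>\<rho>. int (pdiv p \<rho>)))"
proof (cases "snd p = []")
  case True
  then show ?thesis by (simp add: vvec_def pdiv_def phead_def ptail_def zero_prod_def zero_fun_def)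
next
  case False
  then show ?thesis using assms
    by (simp add: vvec_eq_sum_list pi_map_arrow_list pdiv_def phead_def ptail_def valid_path_def)
qed

lemma pi_map_vvec_cong:
  assumes "valid_path r Q1 p" "valid_path r Q1 p'"
    and "ptail p = ptail p'" "phead p = phead p'" "pdiv p = pdiv p'"
  shows "pi_map (vvec p) = pi_map (vvec p')"
  using assms by (simp add: pi_map_vvec)

lemma zspan_subset:
  assumes "S \<subseteq> G" "0 \<in> G"
    and "\<And>x y. x \<in> G \<Longrightarrow> y \<in> G \<Longrightarrow> x + y \<in> G" "\<And>x. x \<in> G \<Longrightarrow> - x \<in> G"
  shows "zspan S \<subseteq> G"
proof
  show "x \<in> G" if "x \<in> zspan S" for x
    using that by induction (use assms in auto)
qed

lemma zspan_diff: "x \<in> zspan S \<Longrightarrow> y \<in> zspan S \<Longrightarrow> x - y \<in> zspan S"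
  by (metis diff_conv_add_uminus zspan.add zspan.neg)

lemma mem_ker_pi_iff: "w \<in> ker_pi Q1 \<longleftrightarrow> Poly_Mapping.keys w \<subseteq> Q1 \<and> pi_map w = 0"
  by (simp add: ker_pi_def zero_prod_def zero_fun_def)

lemma ker_pi_add: "x \<in> ker_pi Q1 \<Longrightarrow> y \<in> ker_pi Q1 \<Longrightarrow> x + y \<in> ker_pi Q1"
  using keys_add[of x y] by (auto simp: mem_ker_pi_iff pi_map_add)

lemma ker_pi_uminus: "x \<in> ker_pi Q1 \<Longrightarrow> - x \<in> ker_pi Q1"
  by (simp add: mem_ker_pi_iff pi_map_uminus)

lemma vvec_diff_mem_ker_pi:
  assumes "valid_path r Q1 p" "valid_path r Q1 p'"
    and "ptail p = ptail p'" "phead p = phead p'" "pdiv p = pdiv p'"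
  shows "vvec p - vvec p' \<in> ker_pi Q1"
proof -
  have "set (snd p) \<subseteq> Q1" "set (snd p') \<subseteq> Q1"
    using assms(1,2) by (auto simp: valid_path_def)
  then have "Poly_Mapping.keys (vvec p - vvec p') \<subseteq> Q1"
    using keys_diff[of "vvec p" "vvec p'"] keys_vvec[of p] keys_vvec[of p'] by blast
  then show ?thesis
    using pi_map_vvec_cong[OF assms] by (simp add: mem_ker_pi_iff pi_map_diff)
qed

lemma derivW_D:
  assumes "p \<in> derivW d r Q1 q"
  shows "valid_path r Q1 p" "ptail p = phead q" "phead p = ptail q"
    and "\<forall>\<rho><d. pdiv q \<rho> + pdiv p \<rho> = 1"
  using assms phead_pcomp[of p q] by (auto simp: derivW_def anticanonical_def pdiv_pcomp)

lemma pdiv_quiver_arrows_beyond: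
  assumes "valid_path r (quiver_arrows n d v r D) p" "d \<le> \<rho>"
  shows "pdiv p \<rho> = 0"
proof -
  have "alabel a \<rho> = 0" if "a \<in> quiver_arrows n d v r D" for a
    using that assms(2)
    by (auto simp: quiver_arrows_def irreducible_section_def is_section_def alabel_def)
  then show ?thesis
    using assms(1) by (auto simp: pdiv_def valid_path_def sum_list_eq_0_iff)
qed

text \<open>Two terms of \<open>\<partial>\<^sub>qW\<close> complete \<open>q\<close> to anticanonical cycles, so they have the same
  ends and the same label \<open>(1,\<dots>,1) - div q\<close>.\<close>

lemma derivW_parallel:
  assumes "p \<in> derivW d r (quiver_arrows n d v r D) q" "p' \<in> derivW d r (quiver_arrows n d v r D) q"
  shows "ptail p = ptail p'" "phead p = phead p'" "pdiv p = pdiv p'"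
proof -
  note p = derivW_D[OF assms(1)] and p' = derivW_D[OF assms(2)]
  show "ptail p = ptail p'" "phead p = phead p'" using p p' by simp_all
  have "pdiv p \<rho> = pdiv p' \<rho>" for \<rho>
  proof (cases "\<rho> < d")
    case True
    then show ?thesis using p(4) p'(4) by (metis add_left_cancel)
  next
    case False
    then show ?thesis using pdiv_quiver_arrows_beyond p(1) p'(1) by (metis not_less)
  qed
  then show "pdiv p = pdiv p'" ..
qed

lemma L_lattice_subset_ker_pi:
  "L_lattice d r (quiver_arrows n d v r D) \<subseteq> ker_pi (quiver_arrows n d v r D)"
  unfolding L_lattice_def
proof (rule zspan_subset)
  show "{vvec p - vvec p' | p p' q. q \<in> Pset d r (quiver_arrows n d v r D) \<and>
      derivW d r (quiver_arrows n d v r D) q = {p, p'}} \<subseteq> ker_pi (quiver_arrows n d v r D)"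
  proof clarify
    fix p p' q
    assume "derivW d r (quiver_arrows n d v r D) q = {p, p'}"
    then have "p \<in> derivW d r (quiver_arrows n d v r D) q" "p' \<in> derivW d r (quiver_arrows n d v r D) q"
      by auto
    from derivW_D(1)[OF this(1)] derivW_D(1)[OF this(2)] derivW_parallel[OF this]
    show "vvec p - vvec p' \<in> ker_pi (quiver_arrows n d v r D)"
      by (rule vvec_diff_mem_ker_pi)
  qed
qed (auto simp: mem_ker_pi_iff[of 0] intro: ker_pi_add ker_pi_uminus)

subsection \<open>The quiver of sections is strongly connected\<close>

text \<open>In the Gorenstein case \<open>div(\<chi>\<^sup>u) = (1,\<dots>,1)\<close> for some \<open>u\<close>; adding a large multiple of it
  makes any divisor effective.\<close>

lemma gorenstein_section_exists:
  assumes "\<exists>u. \<forall>\<rho><d. pairing n u (v \<rho>) = 1"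
  shows "\<exists>E. is_section n d v F E"
proof -
  obtain u where u: "\<forall>\<rho><d. pairing n u (v \<rho>) = 1" using assms by blast
  define N where "N = (\<Sum>\<rho><d. \<bar>F \<rho>\<bar>)"
  define E where "E = (\<lambda>\<rho>. if \<rho> < d then nat (N + F \<rho>) else 0)"
  have "\<bar>F \<rho>\<bar> \<le> N" if "\<rho> < d" for \<rho>
    unfolding N_def using that by (intro member_le_sum) auto
  then have E: "int (E \<rho>) = N + F \<rho>" if "\<rho> < d" for \<rho>
    using that by (fastforce simp: E_def)
  have "pairing n (\<lambda>k. N * u k) (v \<rho>) = N * pairing n u (v \<rho>)" for \<rho>
    by (simp add: pairing_def sum_distrib_left mult.assoc)
  then have "is_section n d v F E"
    using u E by (auto simp: is_section_def lin_equiv_def E_def intro!: exI[of _ "\<lambda>k. N * u k"])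
  then show ?thesis by blast
qed

lemma is_section_zero_lin_equiv:
  "is_section n d v (\<lambda>\<rho>. D' \<rho> - D \<rho>) (\<lambda>_. 0) \<Longrightarrow> lin_equiv n d v D D'"
  by (auto simp: is_section_def lin_equiv_def)

lemma is_section_sum_pos:
  assumes "is_section n d v F E" "E \<noteq> (\<lambda>_. 0)"
  shows "0 < (\<Sum>\<rho><d. E \<rho>)"
proof (rule ccontr)
  assume "\<not> 0 < (\<Sum>\<rho><d. E \<rho>)"
  then have "E \<rho> = 0" for \<rho>
    using assms(1) by (cases "\<rho> < d") (auto simp: is_section_def)
  with assms(2) show False by auto
qed

text \<open>A section factors into irreducible ones; induct on its total degree.\<close>

lemma section_gives_path:
  assumes distinct: "\<forall>i\<le>r. \<forall>j\<le>r. i \<noteq> j \<longrightarrow> \<not> lin_equiv n d v (D i) (D j)"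
    and "i \<le> r" "j \<le> r" "is_section n d v (\<lambda>\<rho>. D j \<rho> - D i \<rho>) E"
  shows "\<exists>p. valid_path r (quiver_arrows n d v r D) p \<and> ptail p = i \<and> phead p = j"
  using assms(2-)
proof (induction "\<Sum>\<rho><d. E \<rho>" arbitrary: i j E rule: less_induct)
  case less
  let ?Q = "quiver_arrows n d v r D"
  consider "E = (\<lambda>_. 0)" | "irreducible_section n d v r D i j E"
    | k E1 E2 where "k \<le> r" "k \<noteq> i" "k \<noteq> j"
        "is_section n d v (\<lambda>\<rho>. D k \<rho> - D i \<rho>) E1" "is_section n d v (\<lambda>\<rho>. D j \<rho> - D k \<rho>) E2"
        "E = (\<lambda>\<rho>. E1 \<rho> + E2 \<rho>)"
    using less.prems(3) unfolding irreducible_section_def by blast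
  then show ?case
  proof cases
    case 1
    then have "i = j"
      using less.prems distinct is_section_zero_lin_equiv by blast
    then show ?thesis
      using less.prems(1) valid_path_trivial by (auto simp: ptail_def phead_def)
  next
    case 2
    then have "(i, j, E) \<in> ?Q"
      using less.prems(1,2) by (simp add: quiver_arrows_def)
    then have "valid_path r ?Q (i, [(i, j, E)])"
      using less.prems(1) valid_path_arrow[of "(i, j, E)" ?Q] by (simp add: atail_def)
    then show ?thesis
      by (intro exI[of _ "(i, [(i, j, E)])"]) (simp add: ptail_def phead_def ahead_def)
  next
    case (3 k E1 E2)
    have "E1 \<noteq> (\<lambda>_. 0)" "E2 \<noteq> (\<lambda>_. 0)"
      using 3 less.prems(1,2) distinct is_section_zero_lin_equiv by metis+
    then have "0 < (\<Sum>\<rho><d. E1 \<rho>)" "0 < (\<Sum>\<rho><d. E2 \<rho>)"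
      using 3 is_section_sum_pos by blast+
    moreover have "(\<Sum>\<rho><d. E \<rho>) = (\<Sum>\<rho><d. E1 \<rho>) + (\<Sum>\<rho><d. E2 \<rho>)"
      by (simp add: 3 sum.distrib)
    ultimately obtain q1 q2 where
      q1: "valid_path r ?Q q1" "ptail q1 = i" "phead q1 = k" and
      q2: "valid_path r ?Q q2" "ptail q2 = k" "phead q2 = j"
      using less.hyps[of E1 i k] less.hyps[of E2 k j] less.prems 3 by auto
    then show ?thesis
      by (intro exI[of _ "pcomp q2 q1"]) (simp add: valid_path_pcomp phead_pcomp)
  qed
qed

lemma quiver_arrows_path_exists:
  assumes "\<exists>u. \<forall>\<rho><d. pairing n u (v \<rho>) = 1"
    and "\<forall>i\<le>r. \<forall>j\<le>r. i \<noteq> j \<longrightarrow> \<not> lin_equiv n d v (D i) (D j)"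
    and "i \<le> r" "j \<le> r"
  shows "\<exists>p. valid_path r (quiver_arrows n d v r D) p \<and> ptail p = i \<and> phead p = j"
  using gorenstein_section_exists[OF assms(1)] section_gives_path[OF assms(2-4)] by blast

subsection \<open>Kernel elements are differences of closed walks\<close>

definition closed_walk :: "nat \<Rightarrow> arrow set \<Rightarrow> nat \<Rightarrow> path \<Rightarrow> bool" where
  "closed_walk r Q1 b p \<longleftrightarrow> valid_path r Q1 p \<and> ptail p = b \<and> phead p = b"

definition based_path_diffs :: "nat \<Rightarrow> arrow set \<Rightarrow> nat \<Rightarrow> (arrow \<Rightarrow>\<^sub>0 int) set" where
  "based_path_diffs r Q1 b = {vvec P - vvec N | P N. valid_path r Q1 P \<and> valid_path r Q1 N \<and>
     ptail P = b \<and> ptail N = b \<and> phead P = phead N}"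

lemma closed_walk_trivial: "b \<le> r \<Longrightarrow> closed_walk r Q1 b (b, [])"
  by (simp add: closed_walk_def valid_path_trivial ptail_def phead_def)

lemma closed_walk_pcomp:
  "closed_walk r Q1 b p \<Longrightarrow> closed_walk r Q1 b q \<Longrightarrow> closed_walk r Q1 b (pcomp p q)"
  by (simp add: closed_walk_def valid_path_pcomp phead_pcomp)

text \<open>Close both paths of a generator by the same return path to \<open>b\<close>.\<close>

lemma zspan_based_path_diffs_closed_walks:
  assumes return_paths: "\<forall>i\<le>r. \<exists>p. valid_path r Q1 p \<and> ptail p = i \<and> phead p = b"
    and arr: "\<forall>a\<in>Q1. ahead a \<le> r" and "b \<le> r"
    and "x \<in> zspan (based_path_diffs r Q1 b)"
  shows "\<exists>P N. closed_walk r Q1 b P \<and> closed_walk r Q1 b N \<and> x = vvec P - vvec N"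
  using assms(4)
proof induction
  case zero
  show ?case
    using closed_walk_trivial[OF \<open>b \<le> r\<close>] by (intro exI[of _ "(b, [])"]) simp
next
  case (gen s)
  then obtain P N where s: "s = vvec P - vvec N" and PN: "valid_path r Q1 P" "valid_path r Q1 N"
    "ptail P = b" "ptail N = b" "phead P = phead N"
    by (auto simp: based_path_diffs_def)
  obtain c where c: "valid_path r Q1 c" "ptail c = phead P" "phead c = b"
    using return_paths phead_valid_path_le[OF PN(1) arr] by blast
  have "closed_walk r Q1 b (pcomp c P)" "closed_walk r Q1 b (pcomp c N)"
    using c PN by (simp_all add: closed_walk_def valid_path_pcomp phead_pcomp)
  moreover have "s = vvec (pcomp c P) - vvec (pcomp c N)"
    by (simp add: s vvec_pcomp)
  ultimately show ?case by blast
next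
  case (add x y)
  then obtain P1 N1 P2 N2 where "closed_walk r Q1 b P1" "closed_walk r Q1 b N1"
    "closed_walk r Q1 b P2" "closed_walk r Q1 b N2"
    "x = vvec P1 - vvec N1" "y = vvec P2 - vvec N2"
    by blast
  then show ?case
    by (intro exI[of _ "pcomp P1 P2"] exI[of _ "pcomp N1 N2"])
       (simp add: closed_walk_pcomp vvec_pcomp)
next
  case (neg x)
  then obtain P N where "closed_walk r Q1 b P" "closed_walk r Q1 b N" "x = vvec P - vvec N"
    by blast
  then show ?case by (intro exI[of _ N] exI[of _ P]) simp
qed

lemma sum_frag_cmul_of_bool:
  assumes "finite A"
  shows "(\<Sum>i\<in>A. frag_cmul (of_bool (h = i)) (g i)) = (if h \<in> A then g h else 0)"
proof -
  have "(\<Sum>i\<in>A. frag_cmul (of_bool (h = i)) (g i)) = (\<Sum>i\<in>A. if h = i then g i else 0)"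
    by (rule sum.cong) auto
  then show ?thesis using assms by (simp add: sum.delta)
qed

text \<open>With \<open>\<gamma> i\<close> a path from \<open>b\<close> to \<open>i\<close>, an arrow \<open>a\<close> is congruent to
  \<open>v(\<gamma>(head a)) - v(\<gamma>(tail a))\<close> modulo the based path differences.\<close>

lemma diff_potential_mem_zspan_based_path_diffs:
  assumes \<gamma>: "\<And>i. i \<le> r \<Longrightarrow> valid_path r Q1 (\<gamma> i) \<and> ptail (\<gamma> i) = b \<and> phead (\<gamma> i) = i"
    and arr: "\<forall>a\<in>Q1. atail a \<le> r \<and> ahead a \<le> r"
    and "Poly_Mapping.keys z \<subseteq> Q1"
  shows "z - (\<Sum>i\<le>r. frag_cmul (fst (pi_map z) i) (vvec (\<gamma> i))) \<in> zspan (based_path_diffs r Q1 b)"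
  using assms(3)
proof (induction z rule: frag_induction)
  case zero
  show ?case by (simp add: zspan.zero)
next
  case (one a)
  then have tail: "atail a \<le> r" and head: "ahead a \<le> r" using arr by auto
  have pot: "(\<Sum>i\<le>r. frag_cmul (fst (pi_map (frag_of a)) i) (vvec (\<gamma> i)))
      = vvec (\<gamma> (ahead a)) - vvec (\<gamma> (atail a))"
    using tail head
    by (simp add: pi_map_frag_of frag_cmul_diff_distrib sum_subtractf sum_frag_cmul_of_bool)
  let ?p = "pcomp (atail a, [a]) (\<gamma> (atail a))"
  have "valid_path r Q1 (atail a, [a])" "ptail (atail a, [a]) = atail a"
    "phead (atail a, [a]) = ahead a"
    using valid_path_arrow[OF one tail] by (simp_all add: ptail_def phead_def)
  then have "valid_path r Q1 ?p" "ptail ?p = b" "phead ?p = ahead a"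
    using \<gamma>[OF tail] by (simp_all add: valid_path_pcomp phead_pcomp)
  then have "vvec ?p - vvec (\<gamma> (ahead a)) \<in> based_path_diffs r Q1 b"
    using \<gamma>[OF head] unfolding based_path_diffs_def
    by (intro CollectI exI[of _ ?p] exI[of _ "\<gamma> (ahead a)"]) simp
  moreover have "vvec ?p = vvec (\<gamma> (atail a)) + frag_of a"
    unfolding vvec_pcomp by (simp add: vvec_def)
  ultimately show ?case
    unfolding pot by (simp add: zspan.gen algebra_simps)
next
  case (diff x y)
  have split: "(x - y) - (\<Sum>i\<le>r. frag_cmul (fst (pi_map (x - y)) i) (vvec (\<gamma> i)))
      = (x - (\<Sum>i\<le>r. frag_cmul (fst (pi_map x) i) (vvec (\<gamma> i))))
        - (y - (\<Sum>i\<le>r. frag_cmul (fst (pi_map y) i) (vvec (\<gamma> i))))"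
    by (simp add: pi_map_diff frag_cmul_diff_distrib sum_subtractf)
  show ?case unfolding split by (rule zspan_diff[OF diff.IH])
qed

lemma ker_pi_closed_walk_diff:
  assumes conn: "\<forall>i\<le>r. \<forall>j\<le>r. \<exists>p. valid_path r Q1 p \<and> ptail p = i \<and> phead p = j"
    and arr: "\<forall>a\<in>Q1. atail a \<le> r \<and> ahead a \<le> r" and "b \<le> r"
    and "w \<in> ker_pi Q1"
  shows "\<exists>P N. closed_walk r Q1 b P \<and> closed_walk r Q1 b N \<and> w = vvec P - vvec N"
proof -
  obtain \<gamma> where \<gamma>: "\<And>i. i \<le> r \<Longrightarrow> valid_path r Q1 (\<gamma> i) \<and> ptail (\<gamma> i) = b \<and> phead (\<gamma> i) = i"
    using conn \<open>b \<le> r\<close> by metis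
  have "Poly_Mapping.keys w \<subseteq> Q1" "pi_map w = 0"
    using \<open>w \<in> ker_pi Q1\<close> by (simp_all add: mem_ker_pi_iff)
  then have "w \<in> zspan (based_path_diffs r Q1 b)"
    using diff_potential_mem_zspan_based_path_diffs[OF \<gamma> arr, of w] by simp
  then show ?thesis
    using zspan_based_path_diffs_closed_walks[of r Q1 b] conn arr \<open>b \<le> r\<close> by blast
qed

subsection \<open>Coefficient sums over classes of paths modulo \<open>L\<close>\<close>

definition coeff_sum :: "'a set \<Rightarrow> ('a \<Rightarrow>\<^sub>0 'b::comm_monoid_add) \<Rightarrow> 'b" where
  "coeff_sum C x = (\<Sum>p\<in>Poly_Mapping.keys x \<inter> C. Poly_Mapping.lookup x p)"

lemma coeff_sum_eq_sum:
  "finite A \<Longrightarrow> Poly_Mapping.keys x \<subseteq> A \<Longrightarrow> coeff_sum C x = (\<Sum>p\<in>A \<inter> C. Poly_Mapping.lookup x p)"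
  unfolding coeff_sum_def by (intro sum.mono_neutral_left) (auto simp: in_keys_iff)

lemma coeff_sum_add: "coeff_sum C (x + y) = coeff_sum C x + coeff_sum C y"
proof -
  let ?A = "Poly_Mapping.keys x \<union> Poly_Mapping.keys y"
  have "finite ?A" "Poly_Mapping.keys (x + y) \<subseteq> ?A" "Poly_Mapping.keys x \<subseteq> ?A"
    "Poly_Mapping.keys y \<subseteq> ?A"
    using keys_add[of x y] by auto
  then show ?thesis by (simp add: coeff_sum_eq_sum[of ?A] lookup_add sum.distrib)
qed

lemma coeff_sum_diff:
  fixes x :: "'a \<Rightarrow>\<^sub>0 'b::ab_group_add"
  shows "coeff_sum C (x - y) = coeff_sum C x - coeff_sum C y"
proof -
  let ?A = "Poly_Mapping.keys x \<union> Poly_Mapping.keys y"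
  have "finite ?A" "Poly_Mapping.keys (x - y) \<subseteq> ?A" "Poly_Mapping.keys x \<subseteq> ?A"
    "Poly_Mapping.keys y \<subseteq> ?A"
    using keys_diff[of x y] by auto
  then show ?thesis by (simp add: coeff_sum_eq_sum[of ?A] lookup_minus sum_subtractf)
qed

lemma coeff_sum_zero [simp]: "coeff_sum C 0 = 0"
  by (simp add: coeff_sum_def)

lemma coeff_sum_single: "coeff_sum C (Poly_Mapping.single t c) = (if t \<in> C then c else 0)"
  by (simp add: coeff_sum_eq_sum[of "{t}"])

lemma coeff_sum_sum: "coeff_sum C (sum f I) = (\<Sum>i\<in>I. coeff_sum C (f i))"
  by (induction I rule: infinite_finite_induct) (simp_all add: coeff_sum_add)

definition path_class ::
  "nat \<Rightarrow> arrow set \<Rightarrow> (arrow \<Rightarrow>\<^sub>0 int) set \<Rightarrow> nat \<Rightarrow> nat \<Rightarrow> (arrow \<Rightarrow>\<^sub>0 int) \<Rightarrow> path set" where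
  "path_class r Q1 L i j c = {p. valid_path r Q1 p \<and> ptail p = i \<and> phead p = j \<and> vvec p - c \<in> L}"

lemma pcomp_mem_path_class_left:
  assumes "valid_path r Q1 p" "valid_path r Q1 q" "ptail p = phead q"
  shows "pcomp p q \<in> path_class r Q1 L i j c \<longleftrightarrow>
    phead p = j \<and> q \<in> path_class r Q1 L i (ptail p) (c - vvec p)"
  using assms by (auto simp: path_class_def valid_path_pcomp phead_pcomp vvec_pcomp algebra_simps)

lemma pcomp_mem_path_class_right:
  assumes "valid_path r Q1 p" "valid_path r Q1 q" "ptail p = phead q"
  shows "pcomp p q \<in> path_class r Q1 L i j c \<longleftrightarrow>
    ptail q = i \<and> p \<in> path_class r Q1 L (phead q) j (c - vvec q)"
  using assms by (auto simp: path_class_def valid_path_pcomp phead_pcomp vvec_pcomp algebra_simps)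

lemma sum_if_conj_mem:
  "finite A \<Longrightarrow> (\<Sum>q\<in>A. if B \<and> q \<in> C then f q else 0) = (if B then (\<Sum>q\<in>A \<inter> C. f q) else 0)"
  by (cases B) (simp_all add: sum.inter_restrict)

lemma coeff_sum_path_class_pa_mult_left:
  "coeff_sum (path_class r Q1 L i j c) (pa_mult r Q1 u x) =
    (\<Sum>p\<in>Poly_Mapping.keys u. if valid_path r Q1 p \<and> phead p = j
       then Poly_Mapping.lookup u p * coeff_sum (path_class r Q1 L i (ptail p) (c - vvec p)) x else 0)"
proof -
  let ?C = "path_class r Q1 L i j c" and ?C' = "\<lambda>p. path_class r Q1 L i (ptail p) (c - vvec p)"
  have summand: "coeff_sum ?C (if valid_path r Q1 p \<and> valid_path r Q1 q \<and> ptail p = phead q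
      then Poly_Mapping.single (pcomp p q) (Poly_Mapping.lookup u p * Poly_Mapping.lookup x q) else 0)
    = (if (valid_path r Q1 p \<and> phead p = j) \<and> q \<in> ?C' p
       then Poly_Mapping.lookup u p * Poly_Mapping.lookup x q else 0)" for p q
    using pcomp_mem_path_class_left[of r Q1 p q L i j c]
    by (auto simp: coeff_sum_single path_class_def)
  have inner: "(\<Sum>q\<in>Poly_Mapping.keys x. if (valid_path r Q1 p \<and> phead p = j) \<and> q \<in> ?C' p
       then Poly_Mapping.lookup u p * Poly_Mapping.lookup x q else 0)
    = (if valid_path r Q1 p \<and> phead p = j
       then Poly_Mapping.lookup u p * coeff_sum (?C' p) x else 0)" for p
    by (simp only: sum_if_conj_mem[OF finite_keys]) (simp add: coeff_sum_def sum_distrib_left)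
  show ?thesis
    unfolding pa_mult_def coeff_sum_sum summand inner ..
qed

lemma coeff_sum_path_class_pa_mult_right:
  "coeff_sum (path_class r Q1 L i j c) (pa_mult r Q1 x u) =
    (\<Sum>q\<in>Poly_Mapping.keys u. if valid_path r Q1 q \<and> ptail q = i
       then coeff_sum (path_class r Q1 L (phead q) j (c - vvec q)) x * Poly_Mapping.lookup u q else 0)"
proof -
  let ?C = "path_class r Q1 L i j c" and ?C' = "\<lambda>q. path_class r Q1 L (phead q) j (c - vvec q)"
  have summand: "coeff_sum ?C (if valid_path r Q1 p \<and> valid_path r Q1 q \<and> ptail p = phead q
      then Poly_Mapping.single (pcomp p q) (Poly_Mapping.lookup x p * Poly_Mapping.lookup u q) else 0)
    = (if (valid_path r Q1 q \<and> ptail q = i) \<and> p \<in> ?C' q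
       then Poly_Mapping.lookup x p * Poly_Mapping.lookup u q else 0)" for p q
    using pcomp_mem_path_class_right[of r Q1 p q L i j c]
    by (auto simp: coeff_sum_single path_class_def)
  have inner: "(\<Sum>p\<in>Poly_Mapping.keys x. if (valid_path r Q1 q \<and> ptail q = i) \<and> p \<in> ?C' q
       then Poly_Mapping.lookup x p * Poly_Mapping.lookup u q else 0)
    = (if valid_path r Q1 q \<and> ptail q = i
       then coeff_sum (?C' q) x * Poly_Mapping.lookup u q else 0)" for q
    by (simp only: sum_if_conj_mem[OF finite_keys]) (simp add: coeff_sum_def sum_distrib_right)
  show ?thesis
    unfolding pa_mult_def coeff_sum_sum summand by (subst sum.swap) (simp only: inner)
qed

text \<open>Left multiplication by a path \<open>p\<close> carries the class with offset \<open>c - v(p)\<close> into the one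
  with offset \<open>c\<close> (similarly on the right), so vanishing on all classes passes to the ideal.\<close>

lemma ideal_gen_coeff_sum_path_class:
  fixes S :: "(path \<Rightarrow>\<^sub>0 'k::field) set"
  assumes "x \<in> ideal_gen r Q1 S"
    and "\<And>s i j c. s \<in> S \<Longrightarrow> coeff_sum (path_class r Q1 L i j c) s = 0"
  shows "coeff_sum (path_class r Q1 L i j c) x = 0"
  using assms(1)
proof (induction arbitrary: i j c)
  case (lmult x u)
  then show ?case
    unfolding coeff_sum_path_class_pa_mult_left by (intro sum.neutral) auto
next
  case (rmult x u)
  then show ?case
    unfolding coeff_sum_path_class_pa_mult_right by (intro sum.neutral) auto
qed (simp_all add: assms(2) coeff_sum_add)

text \<open>The two terms of a generator of \<open>J\<^sub>W\<close> are parallel and congruent modulo \<open>L\<close>, so they lie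
  in the same class and their coefficients cancel.\<close>

lemma coeff_sum_path_class_J_W:
  fixes n d r :: nat and v D :: "nat \<Rightarrow> nat \<Rightarrow> int"
    and x :: "path \<Rightarrow>\<^sub>0 'k::field"
  defines "Q \<equiv> quiver_arrows n d v r D"
  assumes "x \<in> J_W d r Q"
  shows "coeff_sum (path_class r Q (L_lattice d r Q) i j c) x = 0"
  using assms(2) unfolding J_W_def
proof (rule ideal_gen_coeff_sum_path_class, clarify)
  fix p p' q i j c
  assume q: "q \<in> Pset d r Q" and pq: "derivW d r Q q = {p, p'}"
  then have mem: "p \<in> derivW d r Q q" "p' \<in> derivW d r Q q" by auto
  have "vvec p - vvec p' \<in> zspan {vvec p - vvec p' | p p' q. q \<in> Pset d r Q \<and> derivW d r Q q = {p, p'}}"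
    using q pq by (intro zspan.gen) blast
  then have "vvec p - c \<in> L_lattice d r Q \<longleftrightarrow> vvec p' - c \<in> L_lattice d r Q"
    unfolding L_lattice_def
    using zspan_diff[of "vvec p - c" _ "vvec p - vvec p'"] zspan.add[of "vvec p' - c" _ "vvec p - vvec p'"]
    by (auto simp: algebra_simps)
  then have "p \<in> path_class r Q (L_lattice d r Q) i j c \<longleftrightarrow> p' \<in> path_class r Q (L_lattice d r Q) i j c"
    using derivW_D(1)[OF mem(1)] derivW_D(1)[OF mem(2)] derivW_parallel[OF mem[unfolded Q_def]]
    by (auto simp: path_class_def Q_def)
  then show "coeff_sum (path_class r Q (L_lattice d r Q) i j c) (pa_path p - pa_path p' :: path \<Rightarrow>\<^sub>0 'k) = 0"
    by (simp add: pa_path_def coeff_sum_diff coeff_sum_single)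
qed

lemma vvec_diff_mem_L_lattice_if_J_W:
  fixes n d r :: nat and v D :: "nat \<Rightarrow> nat \<Rightarrow> int"
  defines "Q \<equiv> quiver_arrows n d v r D"
  assumes "(pa_path P - pa_path N :: path \<Rightarrow>\<^sub>0 'k::field) \<in> J_W d r Q" "valid_path r Q P"
  shows "vvec P - vvec N \<in> L_lattice d r Q"
proof -
  let ?C = "path_class r Q (L_lattice d r Q) (ptail P) (phead P) (vvec P)"
  have P: "P \<in> ?C"
    using assms(3) by (simp add: path_class_def L_lattice_def zspan.zero)
  have "coeff_sum ?C (pa_path P - pa_path N :: path \<Rightarrow>\<^sub>0 'k) = 0"
    using assms(2) unfolding Q_def by (rule coeff_sum_path_class_J_W)
  then have "N \<in> ?C"
    using P by (auto simp: pa_path_def coeff_sum_diff coeff_sum_single split: if_splits)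
  then have "vvec N - vvec P \<in> L_lattice d r Q"
    by (simp add: path_class_def)
  then have "- (vvec N - vvec P) \<in> L_lattice d r Q"
    unfolding L_lattice_def by (rule zspan.neg)
  then show ?thesis by simp
qed

lemma ker_pi_subset_L_lattice:
  fixes n d r :: nat and v D :: "nat \<Rightarrow> nat \<Rightarrow> int"
    and K :: "'k::field itself"
  defines "Q \<equiv> quiver_arrows n d v r D"
  assumes gorenstein: "\<exists>u. \<forall>\<rho><d. pairing n u (v \<rho>) = 1"
    and distinct: "\<forall>i\<le>r. \<forall>j\<le>r. i \<noteq> j \<longrightarrow> \<not> lin_equiv n d v (D i) (D j)"
    and consistent: "(J_W d r Q :: (path \<Rightarrow>\<^sub>0 'k) set) = J_E r Q"
  shows "ker_pi Q \<subseteq> L_lattice d r Q"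
proof
  fix w assume w: "w \<in> ker_pi Q"
  have arrows: "\<forall>a\<in>Q. atail a \<le> r \<and> ahead a \<le> r"
    by (auto simp: Q_def quiver_arrows_def atail_def ahead_def)
  have conn: "\<forall>i\<le>r. \<forall>j\<le>r. \<exists>p. valid_path r Q p \<and> ptail p = i \<and> phead p = j"
    unfolding Q_def using quiver_arrows_path_exists[OF gorenstein distinct] by blast
  obtain P N where P: "closed_walk r Q 0 P" and N: "closed_walk r Q 0 N"
    and w_eq: "w = vvec P - vvec N"
    using ker_pi_closed_walk_diff[OF conn arrows _ w] by blast
  have "int (pdiv P \<rho>) - int (pdiv N \<rho>) = snd (pi_map w) \<rho>" for \<rho>
    using P N by (simp add: w_eq pi_map_diff pi_map_vvec[of r Q] closed_walk_def)
  then have "pdiv P = pdiv N"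
    using w by (auto simp: mem_ker_pi_iff)
  then have "(pa_path P - pa_path N :: path \<Rightarrow>\<^sub>0 'k) \<in> J_E r Q"
    unfolding J_E_def using P N
    by (intro ideal_gen.gen CollectI exI[of _ P] exI[of _ N]) (simp add: closed_walk_def)
  then have "(pa_path P - pa_path N :: path \<Rightarrow>\<^sub>0 'k) \<in> J_W d r Q"
    using consistent by simp
  then show "w \<in> L_lattice d r Q"
    unfolding w_eq Q_def
    by (rule vvec_diff_mem_L_lattice_if_J_W) (use P in \<open>simp add: closed_walk_def Q_def\<close>)
qed

subsection \<open>\<open>J\<^sub>E\<close> is homogeneous for the grading by \<open>\<pi>(v(p))\<close>\<close>

lemma lookup_homog_comp:
  "Poly_Mapping.lookup (homog_comp g x) p = (if pi_map (vvec p) = g then Poly_Mapping.lookup x p else 0)"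
proof -
  have "finite {p. (if pi_map (vvec p) = g then Poly_Mapping.lookup x p else 0) \<noteq> 0}"
    by (rule finite_subset[of _ "Poly_Mapping.keys x"]) (auto simp: in_keys_iff)
  then show ?thesis by (simp add: homog_comp_def)
qed

lemma keys_homog_comp: "Poly_Mapping.keys (homog_comp g x) \<subseteq> Poly_Mapping.keys x"
  by (auto simp: in_keys_iff lookup_homog_comp split: if_splits)

lemma homog_comp_add: "homog_comp g (x + y) = homog_comp g x + homog_comp g y"
  by (rule poly_mapping_eqI) (simp add: lookup_homog_comp lookup_add)

lemma homog_comp_diff: "homog_comp g (x - y) = homog_comp g x - homog_comp g y"
  by (rule poly_mapping_eqI) (simp add: lookup_homog_comp lookup_minus)

lemma homog_comp_zero [simp]: "homog_comp g 0 = 0"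
  by (rule poly_mapping_eqI) (simp add: lookup_homog_comp)

lemma homog_comp_sum: "homog_comp g (sum f I) = (\<Sum>i\<in>I. homog_comp g (f i))"
  by (induction I rule: infinite_finite_induct) (simp_all add: homog_comp_add)

lemma homog_comp_single:
  "homog_comp g (Poly_Mapping.single t c) = (if pi_map (vvec t) = g then Poly_Mapping.single t c else 0)"
  by (rule poly_mapping_eqI) (auto simp: lookup_homog_comp lookup_single when_def)

lemma pi_map_vvec_pcomp_eq_iff:
  "pi_map (vvec (pcomp p q)) = g \<longleftrightarrow> pi_map (vvec q) = g - pi_map (vvec p)"
  "pi_map (vvec (pcomp p q)) = g \<longleftrightarrow> pi_map (vvec p) = g - pi_map (vvec q)"
  by (auto simp: vvec_pcomp pi_map_add algebra_simps)

lemma pa_mult_eq_sum: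
  assumes "finite A" "Poly_Mapping.keys u \<subseteq> A" "finite B" "Poly_Mapping.keys x \<subseteq> B"
  shows "pa_mult r Q1 u x = (\<Sum>p\<in>A. \<Sum>q\<in>B.
      if valid_path r Q1 p \<and> valid_path r Q1 q \<and> ptail p = phead q
      then Poly_Mapping.single (pcomp p q) (Poly_Mapping.lookup u p * Poly_Mapping.lookup x q) else 0)"
  unfolding pa_mult_def using assms
  by (intro sum.mono_neutral_cong_left sum.mono_neutral_left) (auto simp: in_keys_iff intro!: sum.neutral)

lemma homog_comp_pa_mult_left:
  "homog_comp g (pa_mult r Q1 u x) = (\<Sum>p\<in>Poly_Mapping.keys u.
     pa_mult r Q1 (Poly_Mapping.single p (Poly_Mapping.lookup u p)) (homog_comp (g - pi_map (vvec p)) x))"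
proof -
  have "pa_mult r Q1 (Poly_Mapping.single p (Poly_Mapping.lookup u p)) (homog_comp (g - pi_map (vvec p)) x)
     = (\<Sum>q\<in>Poly_Mapping.keys x. homog_comp g (if valid_path r Q1 p \<and> valid_path r Q1 q \<and> ptail p = phead q
      then Poly_Mapping.single (pcomp p q) (Poly_Mapping.lookup u p * Poly_Mapping.lookup x q) else 0))" for p
    by (subst pa_mult_eq_sum[of "{p}" _ "Poly_Mapping.keys x"])
       (auto intro!: sum.cong simp: keys_homog_comp lookup_homog_comp homog_comp_single
         pi_map_vvec_pcomp_eq_iff(1))
  then show ?thesis
    unfolding pa_mult_def homog_comp_sum by simp
qed

lemma homog_comp_pa_mult_right:
  "homog_comp g (pa_mult r Q1 x u) = (\<Sum>q\<in>Poly_Mapping.keys u.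
     pa_mult r Q1 (homog_comp (g - pi_map (vvec q)) x) (Poly_Mapping.single q (Poly_Mapping.lookup u q)))"
proof -
  have "pa_mult r Q1 (homog_comp (g - pi_map (vvec q)) x) (Poly_Mapping.single q (Poly_Mapping.lookup u q))
     = (\<Sum>p\<in>Poly_Mapping.keys x. homog_comp g (if valid_path r Q1 p \<and> valid_path r Q1 q \<and> ptail p = phead q
      then Poly_Mapping.single (pcomp p q) (Poly_Mapping.lookup x p * Poly_Mapping.lookup u q) else 0))" for q
    by (subst pa_mult_eq_sum[of "Poly_Mapping.keys x" _ "{q}"])
       (auto intro!: sum.cong simp: keys_homog_comp lookup_homog_comp homog_comp_single
         pi_map_vvec_pcomp_eq_iff(2))
  then show ?thesis
    unfolding pa_mult_def homog_comp_sum by (simp add: sum.swap[of _ "Poly_Mapping.keys u"])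
qed

lemma ideal_gen_sum:
  "finite I \<Longrightarrow> (\<And>i. i \<in> I \<Longrightarrow> f i \<in> ideal_gen r Q1 S) \<Longrightarrow> sum f I \<in> ideal_gen r Q1 S"
  by (induction I rule: finite_induct) (auto intro: ideal_gen.zero ideal_gen.add)

lemma homog_comp_ideal_gen:
  fixes x :: "path \<Rightarrow>\<^sub>0 'k::field"
  assumes "x \<in> ideal_gen r Q1 S" and "\<And>s g. s \<in> S \<Longrightarrow> homog_comp g s \<in> {0, s}"
  shows "homog_comp g x \<in> ideal_gen r Q1 S"
  using assms(1)
proof (induction arbitrary: g)
  case (gen s)
  then have "homog_comp g s \<in> {0, s}" by (rule assms(2))
  then show ?case using gen by (auto intro: ideal_gen.gen ideal_gen.zero)
next
  case (add x y)
  then show ?case by (simp add: homog_comp_add ideal_gen.add)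
next
  case (lmult x u)
  then show ?case
    unfolding homog_comp_pa_mult_left by (intro ideal_gen_sum ideal_gen.lmult) simp_all
next
  case (rmult x u)
  then show ?case
    unfolding homog_comp_pa_mult_right by (intro ideal_gen_sum ideal_gen.rmult) simp_all
qed (simp add: ideal_gen.zero)

lemma homog_comp_J_E:
  fixes x :: "path \<Rightarrow>\<^sub>0 'k::field"
  assumes "x \<in> J_E r Q1"
  shows "homog_comp g x \<in> J_E r Q1"
  using assms unfolding J_E_def
proof (rule homog_comp_ideal_gen)
  fix s :: "path \<Rightarrow>\<^sub>0 'k" and g
  assume "s \<in> {pa_path p - pa_path p' | p p'. valid_path r Q1 p \<and> valid_path r Q1 p' \<and>
      ptail p = ptail p' \<and> phead p = phead p' \<and> pdiv p = pdiv p'}"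
  then obtain p p' where s: "s = pa_path p - pa_path p'"
    and "valid_path r Q1 p" "valid_path r Q1 p'" "ptail p = ptail p'" "phead p = phead p'" "pdiv p = pdiv p'"
    by blast
  then have "pi_map (vvec p) = pi_map (vvec p')" by (blast intro: pi_map_vvec_cong)
  then show "homog_comp g s \<in> {0, s}"
    by (simp add: s pa_path_def homog_comp_diff homog_comp_single)
qed

theorem lemma3p14:
  fixes n d r :: nat
    and v :: "nat \<Rightarrow> nat \<Rightarrow> int"
    and D :: "nat \<Rightarrow> nat \<Rightarrow> int"
    and K :: "'k::field itself"
  assumes alg_closed: "\<forall>f :: 'k poly. degree f > 0 \<longrightarrow> (\<exists>x. poly f x = 0)"
    and primitive: "\<forall>\<rho><d. \<forall>m::int. m > 1 \<longrightarrow> \<not> (\<forall>k<n. m dvd v \<rho> k)"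
    and rays: "\<forall>\<rho><d. \<not> (\<exists>c::nat \<Rightarrow> real. (\<forall>\<tau>. c \<tau> \<ge> 0) \<and>
                 (\<forall>k<n. real_of_int (v \<rho> k) = (\<Sum>\<tau>\<in>{0..<d} - {\<rho>}. c \<tau> * real_of_int (v \<tau> k))))"
    and strongly_convex: "\<forall>c::nat \<Rightarrow> real. (\<forall>\<tau>. c \<tau> \<ge> 0) \<and>
                 (\<forall>k<n. (\<Sum>\<tau><d. c \<tau> * real_of_int (v \<tau> k)) = 0) \<longrightarrow> (\<forall>\<tau><d. c \<tau> = 0)"
    and fixed_point: "\<forall>u::nat \<Rightarrow> real. (\<forall>\<rho><d. (\<Sum>k<n. u k * real_of_int (v \<rho> k)) = 0) \<longrightarrow> (\<forall>k<n. u k = 0)"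
    and gorenstein: "\<exists>u. \<forall>\<rho><d. pairing n u (v \<rho>) = 1"
    and E0: "lin_equiv n d v (D 0) (\<lambda>_. 0)"
    and distinct: "\<forall>i\<le>r. \<forall>j\<le>r. i \<noteq> j \<longrightarrow> \<not> lin_equiv n d v (D i) (D j)"
    and consistent: "(J_W d r (quiver_arrows n d v r D) :: (path \<Rightarrow>\<^sub>0 'k) set)
                       = J_E r (quiver_arrows n d v r D)"
  shows "ker_pi (quiver_arrows n d v r D) = L_lattice d r (quiver_arrows n d v r D) \<and>
         (\<forall>x \<in> (J_E r (quiver_arrows n d v r D) :: (path \<Rightarrow>\<^sub>0 'k) set).
            \<forall>\<gamma>. homog_comp \<gamma> x \<in> J_E r (quiver_arrows n d v r D))"
proof
  show "ker_pi (quiver_arrows n d v r D) = L_lattice d r (quiver_arrows n d v r D)"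
    using ker_pi_subset_L_lattice[OF gorenstein distinct consistent] L_lattice_subset_ker_pi
    by (rule subset_antisym)
  show "\<forall>x \<in> (J_E r (quiver_arrows n d v r D) :: (path \<Rightarrow>\<^sub>0 'k) set).
      \<forall>\<gamma>. homog_comp \<gamma> x \<in> J_E r (quiver_arrows n d v r D)"
    using homog_comp_J_E by blast
qed

end
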